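(* Let $\mathrm{R}$ be a real closed field, $P,Q,R,S\in\mathrm{R}[X]$ with $P,Q$ not both $0$ and $R,S$ not both $0$, and $a,b\in\mathrm{R}$ with $a<b$. (i) If $a$ is a bad number for $P,Q,R,S$ and $b$ is not, then $\mathrm{Ind}_a^b(PR-QS,PS+QR)=\mathrm{Ind}_a^b(P,Q)+\mathrm{Ind}_a^b(R,S)-\tfrac12\mathrm{Sign}(PS+QR,QS,b)$. (ii) If $b$ is a bad number for $P,Q,R,S$ and $a$ is not, then $\mathrm{Ind}_a^b(PR-QS,PS+QR)=\mathrm{Ind}_a^b(P,Q)+\mathrm{Ind}_a^b(R,S)+\tfrac12\mathrm{Sign}(PS+QR,QS,a)$. (iii) If $a$ and $b$ are both bad numbers for $P,Q,R,S$, then $\mathrm{Ind}_a^b(PR-QS,PS+QR)=\mathrm{Ind}_a^b(P,Q)+\mathrm{Ind}_a^b(R,S)$.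
   Context: For nonzero $P\in\mathrm{R}[X]$ and $x\in\mathrm{R}$ write uniquely $P=(X-x)^{\mathrm{mult}_x(P)}P_x$ with $P_x(x)\neq0$. For $P\ne0$, $Q\neq0$ set $\mathrm{val}_x(P/Q)=\mathrm{mult}_x(P)-\mathrm{mult}_x(Q)$, and $\mathrm{val}_x(0/Q)=+\infty$. $\mathrm{Sign}(P,Q,x)=\mathrm{sign}(P_x(x)Q_x(x))$ if $P\ne0$, $Q\ne0$ and $\mathrm{val}_x(P/Q)=0$, and $0$ otherwise. $\mathrm{Ind}^+_x(P,Q)=\tfrac12\,\mathrm{sign}(P_x(x)Q_x(x))$ and $\mathrm{Ind}^-_x(P,Q)=\tfrac12(-1)^{\mathrm{val}_x(P/Q)}\mathrm{sign}(P_x(x)Q_x(x))$ if $P\ne0$, $Q\neq0$ and $\mathrm{val}_x(P/Q)<0$, both $0$ otherwise; $\mathrm{Ind}_x=\mathrm{Ind}^+_x-\mathrm{Ind}^-_x$; for $a<b$, $\mathrm{Ind}_a^b(P,Q)=\mathrm{Ind}_a^+(P,Q)+\sum_{x\in(a,b)}\mathrm{Ind}_x(P,Q)-\mathrm{Ind}_b^-(P,Q)$. A number $c\in\mathrm{R}$ is a bad number for $P,Q,R,S$ if $Q\ne0$, $S\neq0$, $\mathrm{val}_c(P/Q)=\mathrm{val}_c(R/S)<0$ and $\mathrm{val}_c((PS+QR)/(QS))=0$. *)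

theory Defs
  imports "HOL-Computational_Algebra.Polynomial"
begin

class real_closed_field = linordered_field +
  assumes rcf_square: "0 \<le> x \<Longrightarrow> \<exists>y. x = y * y"
  assumes rcf_odd_root: "odd n \<Longrightarrow> c n \<noteq> 0 \<Longrightarrow> \<exists>x. (\<Sum>i\<le>n. c i * x ^ i) = 0"

text \<open>mult_x(P) is the library's order x P. The cofactor P_x with P = (X - x)^mult P_x.\<close>
definition cofac :: "'a::field \<Rightarrow> 'a poly \<Rightarrow> 'a poly" where
  "cofac x P = P div ([:-x, 1:] ^ order x P)"

text \<open>val_x(P/Q) = mult_x P - mult_x Q (meaningful for P, Q nonzero; the value +\<infinity> for P = 0
  is handled by explicit nonzeroness guards below).\<close>
definition valx :: "'a::field \<Rightarrow> 'a poly \<Rightarrow> 'a poly \<Rightarrow> int" where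
  "valx x P Q = int (order x P) - int (order x Q)"

definition Sign :: "'a::linordered_field poly \<Rightarrow> 'a poly \<Rightarrow> 'a \<Rightarrow> 'a" where
  "Sign P Q x = (if P \<noteq> 0 \<and> Q \<noteq> 0 \<and> valx x P Q = 0
      then sgn (poly (cofac x P) x * poly (cofac x Q) x) else 0)"

definition Ind_plus :: "'a::linordered_field \<Rightarrow> 'a poly \<Rightarrow> 'a poly \<Rightarrow> 'a" where
  "Ind_plus x P Q = (if P \<noteq> 0 \<and> Q \<noteq> 0 \<and> valx x P Q < 0
      then sgn (poly (cofac x P) x * poly (cofac x Q) x) / 2 else 0)"

definition Ind_minus :: "'a::linordered_field \<Rightarrow> 'a poly \<Rightarrow> 'a poly \<Rightarrow> 'a" where
  "Ind_minus x P Q = (if P \<noteq> 0 \<and> Q \<noteq> 0 \<and> valx x P Q < 0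
      then (-1) powi (valx x P Q) * sgn (poly (cofac x P) x * poly (cofac x Q) x) / 2 else 0)"

definition Ind_at :: "'a::linordered_field \<Rightarrow> 'a poly \<Rightarrow> 'a poly \<Rightarrow> 'a" where
  "Ind_at x P Q = Ind_plus x P Q - Ind_minus x P Q"

definition Ind_ab :: "'a::linordered_field \<Rightarrow> 'a \<Rightarrow> 'a poly \<Rightarrow> 'a poly \<Rightarrow> 'a" where
  "Ind_ab a b P Q = Ind_plus a P Q
     + (\<Sum>x\<in>{x. a < x \<and> x < b \<and> Ind_at x P Q \<noteq> 0}. Ind_at x P Q)
     - Ind_minus b P Q"

text \<open>Bad number. val_c(P/Q) < 0 forces P \<noteq> 0 (as val_c(0/Q) = +\<infinity>), similarly for R;
  val_c((PS+QR)/(QS)) = 0 forces PS+QR \<noteq> 0.\<close>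
definition bad :: "'a::field \<Rightarrow> 'a poly \<Rightarrow> 'a poly \<Rightarrow> 'a poly \<Rightarrow> 'a poly \<Rightarrow> bool" where
  "bad c P Q R S \<longleftrightarrow> Q \<noteq> 0 \<and> S \<noteq> 0 \<and> P \<noteq> 0 \<and> R \<noteq> 0
     \<and> valx c P Q = valx c R S \<and> valx c P Q < 0
     \<and> P * S + Q * R \<noteq> 0 \<and> valx c (P * S + Q * R) (Q * S) = 0"

end

(*
  Locally at a point x only the Laurent expansions of the quotients P/Q and R/S at x matter,
  taken in the direction t > 0 for Ind^+ and t < 0 for Ind^-: the index is half the sign of the
  leading coefficient when the expansion has a pole, and 0 otherwise. Writing f and g for these
  expansions, (PR - QS)/(PS + QR) expands to (f g - 1)/(f + g), the cotangent addition formula,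
  and a case analysis on the orders of f and g shows that the index of the product exceeds the
  sum of the indices by -s/2 + V(x), where s is the one-sided sign of (PS + QR)/(QS) and
  V(x) = Sign(PS + QR, QS, x)/2 unless x is bad, in which case V(x) = 0.

  Summing over the points of (a, b), the terms V(x) cancel between the two sides of each
  interior point, and the one-sided signs s telescope, because between consecutive roots a
  polynomial over a real closed field keeps its sign. Only V(a) - V(b) survives.

  Constancy of sign is the intermediate value property, which follows from Laplace's proof that
  R(i) is algebraically closed: inside the algebraic closure of R, a polynomial of degree
  2^k m (m odd) has a root in R(i) because, for every c, the polynomial with roots
  x_i + x_j + c x_i x_j has real coefficients and degree 2^(k-1) m' with m' odd.
*)
theory Submission
  imports Defs "HOL-Algebra.Algebraic_Closure_Type" "HOL-Computational_Algebra.Formal_Laurent_Series"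
begin

unbundle fps_syntax

hide_const (open) Coset.order Polynomials.degree UnivPoly.coeff module.smult Polynomials.lead_coeff
  up_ring.monom

section \<open>Polynomials over the algebraic closure\<close>

abbreviation ac_poly :: "'a::field poly \<Rightarrow> 'a alg_closure poly" where
  "ac_poly p \<equiv> map_poly to_ac p"

lemma coeff_ac_poly [simp]: "coeff (ac_poly p) n = to_ac (coeff p n)"
  by (simp add: coeff_map_poly)

lemma ac_poly_add [simp]: "ac_poly (p + q) = ac_poly p + ac_poly q"
  by (rule poly_eqI) simp

lemma ac_poly_mult [simp]: "ac_poly (p * q) = ac_poly p * ac_poly q"
  by (induction p) (simp_all add: mult_pCons_left poly_eqI map_poly_pCons)

lemma ac_poly_smult [simp]: "ac_poly (smult c p) = smult (to_ac c) (ac_poly p)"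
  by (rule poly_eqI) simp

lemma ac_poly_pCons [simp]: "ac_poly (pCons a p) = pCons (to_ac a) (ac_poly p)"
  by (simp add: map_poly_pCons)

lemma ac_poly_power [simp]: "ac_poly (p ^ n) = ac_poly p ^ n"
  by (induction n) simp_all

lemma ac_poly_sum [simp]: "ac_poly (sum f A) = (\<Sum>x\<in>A. ac_poly (f x))"
  by (induction A rule: infinite_finite_induct) simp_all

lemma poly_ac_poly [simp]: "poly (ac_poly p) (to_ac x) = to_ac (poly p x)"
  by (induction p) (simp_all add: map_poly_pCons)

lemma degree_ac_poly [simp]: "degree (ac_poly p) = degree p"
  by (rule degree_map_poly) simp

lemma ac_poly_eq_0_iff [simp]: "ac_poly p = 0 \<longleftrightarrow> p = 0"
  by (simp add: map_poly_eq_0_iff)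

lemma range_to_ac_add: "a \<in> range to_ac \<Longrightarrow> b \<in> range to_ac \<Longrightarrow> a + b \<in> range to_ac"
  by (auto simp flip: to_ac_add)

lemma range_to_ac_diff: "a \<in> range to_ac \<Longrightarrow> b \<in> range to_ac \<Longrightarrow> a - b \<in> range to_ac"
  by (auto simp flip: to_ac_diff)

lemma range_to_ac_mult: "a \<in> range to_ac \<Longrightarrow> b \<in> range to_ac \<Longrightarrow> a * b \<in> range to_ac"
  by (auto simp flip: to_ac_mult)

lemma range_to_ac_divide: "a \<in> range to_ac \<Longrightarrow> b \<in> range to_ac \<Longrightarrow> a / b \<in> range to_ac"
  by (auto simp flip: to_ac_divide)

lemma range_to_ac_power: "a \<in> range to_ac \<Longrightarrow> a ^ n \<in> range to_ac"
  by (auto simp flip: to_ac_power)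

lemma range_to_ac_of_nat [simp]: "of_nat n \<in> range to_ac"
  by (metis rangeI to_ac_of_nat)

lemma range_to_ac_sum: "(\<And>i. i \<in> I \<Longrightarrow> f i \<in> range to_ac) \<Longrightarrow> sum f I \<in> range to_ac"
  by (induction I rule: infinite_finite_induct) (auto intro: range_to_ac_add)

lemma range_ac_poly_iff: "q \<in> range ac_poly \<longleftrightarrow> (\<forall>i. coeff q i \<in> range to_ac)"
proof
  assume "\<forall>i. coeff q i \<in> range to_ac"
  then have "ac_poly (map_poly of_ac q) = q"
    by (intro poly_eqI) (simp add: coeff_map_poly to_ac_of_ac)
  then show "q \<in> range ac_poly" by (metis rangeI)
qed auto

lemma ac_poly_splits:
  fixes p :: "'a::field poly"
  shows "\<exists>\<alpha>. ac_poly p = smult (to_ac (lead_coeff p)) (\<Prod>i<degree p. [:-\<alpha> i, 1:])"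
proof (cases "p = 0")
  case False
  then obtain A where A: "size A = degree p"
    "ac_poly p = smult (to_ac (lead_coeff p)) (\<Prod>x\<in>#A. [:-x, 1:])"
    using alg_closed_imp_factorization[of "ac_poly p"] by auto
  obtain xs where "mset xs = A" using ex_mset by blast
  then have "(\<Prod>x\<in>#A. [:-x, 1:]) = prod_list (map (\<lambda>x. [:-x, 1:]) xs)"
    by (metis mset_map prod_mset_prod_list)
  also have "\<dots> = (\<Prod>i<degree p. [:-(xs ! i), 1:])"
    using A(1) \<open>mset xs = A\<close> by (auto simp: prod.list_conv_set_nth atLeast0LessThan)
  finally show ?thesis using A(2) by auto
qed simp

lemma degree_prod_linear [simp]: "degree (\<Prod>i<n. [:-\<alpha> i, 1::'b::idom:]) = n"
  by (simp add: degree_prod_eq_sum_degree)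

lemma lead_coeff_prod_linear [simp]: "lead_coeff (\<Prod>i<n. [:-\<alpha> i, 1::'b::idom:]) = 1"
  by (simp add: lead_coeff_prod)

lemma poly_smult_prod_linear_root:
  assumes "i < (n :: nat)"
  shows "poly (smult c (\<Prod>j<n. [:-\<alpha> j, 1::'b::idom:])) (\<alpha> i) = 0"
proof -
  have "[:-\<alpha> i, 1:] dvd (\<Prod>j<n. [:-\<alpha> j, 1:])" using assms by (intro dvd_prodI) auto
  then show ?thesis by (simp add: poly_eq_0_iff_dvd dvd_smult)
qed

lemma ac_poly_of_values:
  fixes S :: "'a::field alg_closure poly"
  assumes "infinite A" "\<And>x. x \<in> A \<Longrightarrow> poly S (to_ac x) \<in> range to_ac"
  shows "S \<in> range ac_poly"
  using assms
proof (induction "degree S" arbitrary: S A rule: less_induct)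
  case less
  obtain x0 where "x0 \<in> A" using \<open>infinite A\<close> by (metis ex_in_conv finite.emptyI)
  define c where "c = poly S (to_ac x0)"
  define T where "T = synthetic_div S (to_ac x0)"
  have c: "c \<in> range to_ac" using less.prems(2)[OF \<open>x0 \<in> A\<close>] by (simp add: c_def)
  have S: "S = pCons c T - smult (to_ac x0) T"
    using synthetic_div_correct[of S "to_ac x0"] by (simp add: c_def T_def algebra_simps)
  show ?case
  proof (cases "degree S = 0")
    case True
    then have "S = [:c:]" by (metis c_def degree_eq_zeroE poly_const_conv)
    then show ?thesis using c by (auto simp: range_ac_poly_iff coeff_pCons split: nat.split)
  next
    case False
    have "poly T (to_ac x) \<in> range to_ac" if "x \<in> A - {x0}" for x
    proof -
      have "poly T (to_ac x) = (poly S (to_ac x) - c) / (to_ac x - to_ac x0)"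
        using that by (subst S) (simp add: field_simps)
      then show ?thesis
        using less.prems(2) that c by (auto intro!: range_to_ac_divide range_to_ac_diff)
    qed
    moreover have "degree T < degree S" using False by (simp add: T_def degree_synthetic_div)
    ultimately have "T \<in> range ac_poly"
      using less.hyps[of T "A - {x0}"] less.prems(1) by simp
    then show ?thesis using c
      by (subst S) (auto simp: range_ac_poly_iff coeff_pCons split: nat.split
          intro!: range_to_ac_diff range_to_ac_mult)
  qed
qed

lemma coeff_square_monic:
  fixes q :: "'a::comm_ring_1 poly"
  assumes "lead_coeff q = 1" "i < degree q"
  shows "coeff (q * q) (degree q + i)
    = 2 * coeff q i + (\<Sum>j\<in>{i<..<degree q}. coeff q j * coeff q (degree q + i - j))"
proof -
  define m where "m = degree q"
  define f where "f j = coeff q j * coeff q (m + i - j)" for j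
  have "coeff (q * q) (m + i) = (\<Sum>j\<le>m + i. f j)"
    by (simp add: coeff_mult f_def)
  also have "\<dots> = (\<Sum>j\<in>{i..m}. f j)"
    by (rule sum.mono_neutral_right) (auto simp: f_def m_def coeff_eq_0)
  also have "{i..m} = insert i (insert m {i<..<m})" using assms(2) by (auto simp: m_def)
  also have "(\<Sum>j\<in>insert i (insert m {i<..<m}). f j) = f i + f m + (\<Sum>j\<in>{i<..<m}. f j)"
    using assms(2) by (simp add: m_def add.assoc)
  finally show ?thesis using assms(1) by (simp add: f_def m_def)
qed

lemma ac_poly_of_square:
  fixes q :: "'a::field_char_0 alg_closure poly"
  assumes "lead_coeff q = 1" "q * q \<in> range ac_poly"
  shows "q \<in> range ac_poly"
proof -
  have "coeff q i \<in> range to_ac" for i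
  proof (induction "degree q - i" arbitrary: i rule: less_induct)
    case less
    show ?case
    proof (cases "i < degree q")
      case True
      have eq: "coeff q i = (coeff (q * q) (degree q + i)
          - (\<Sum>j\<in>{i<..<degree q}. coeff q j * coeff q (degree q + i - j))) / 2"
        using coeff_square_monic[OF assms(1) True] by simp
      have "coeff q j \<in> range to_ac" if "i < j" for j
        using less[of j] that True by simp
      then have "(\<Sum>j\<in>{i<..<degree q}. coeff q j * coeff q (degree q + i - j)) \<in> range to_ac"
        by (auto intro!: range_to_ac_sum range_to_ac_mult)
      moreover have "coeff (q * q) (degree q + i) \<in> range to_ac"
        using assms(2) by (simp add: range_ac_poly_iff)
      moreover have "(2 :: 'a alg_closure) \<in> range to_ac"
        using range_to_ac_of_nat[of 2] by simp
      ultimately show ?thesis unfolding eq by (intro range_to_ac_divide range_to_ac_diff)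
    next
      case False
      then show ?thesis using assms(1) by (cases "i = degree q") (auto simp: coeff_eq_0)
    qed
  qed
  then show ?thesis by (simp add: range_ac_poly_iff)
qed

lemma prod_values_at_roots_swap:
  fixes \<alpha> \<beta> :: "nat \<Rightarrow> 'b::comm_ring_1"
  shows "(\<Prod>i<n. poly (smult b (\<Prod>j<m. [:-\<beta> j, 1:])) (\<alpha> i)) * a ^ m
    = (-1) ^ (n * m) * (\<Prod>j<m. poly (smult a (\<Prod>i<n. [:-\<alpha> i, 1:])) (\<beta> j)) * b ^ n"
proof -
  have "(\<Prod>i<n. \<beta> j - \<alpha> i) = (\<Prod>i<n. (-1) * (\<alpha> i - \<beta> j))" for j
    by (rule prod.cong) auto
  then have "(\<Prod>i<n. \<beta> j - \<alpha> i) = (-1) ^ n * (\<Prod>i<n. \<alpha> i - \<beta> j)" for j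
    by (simp only: prod.distrib prod_constant card_lessThan)
  then have "(\<Prod>j<m. \<Prod>i<n. \<beta> j - \<alpha> i) = (-1) ^ (n * m) * (\<Prod>i<n. \<Prod>j<m. \<alpha> i - \<beta> j)"
    by (simp add: prod.distrib power_mult prod.swap[of _ "{..<m}"])
  then show ?thesis
    by (simp add: poly_prod prod.distrib prod_constant mult_ac)
qed

lemma poly_ac_poly_mod_at_root:
  assumes "poly (ac_poly p) z = 0"
  shows "poly (ac_poly (h mod p)) z = poly (ac_poly h) z"
proof -
  have "ac_poly h = ac_poly (h div p) * ac_poly p + ac_poly (h mod p)"
    by (metis ac_poly_add ac_poly_mult div_mult_mod_eq)
  then show ?thesis using assms by simp
qed

text \<open>A resultant-type symmetric function of the roots of \<open>p\<close>: replacing \<open>h\<close> by \<open>h mod p\<close>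
  and exchanging the roles of the two polynomials decreases the degree, as in Euclid's algorithm.\<close>

lemma prod_values_at_roots_in_range:
  fixes p h :: "'a::field poly"
  assumes "ac_poly p = smult (to_ac (lead_coeff p)) (\<Prod>i<degree p. [:-\<alpha> i, 1:])"
  shows "(\<Prod>i<degree p. poly (ac_poly h) (\<alpha> i)) \<in> range to_ac"
  using assms
proof (induction "degree p" arbitrary: p h \<alpha> rule: less_induct)
  case less
  show ?case
  proof (cases "degree p = 0")
    case True
    then show ?thesis using range_to_ac_of_nat[of 1] by simp
  next
    case False
    then have "p \<noteq> 0" by auto
    define r where "r = h mod p"
    have "poly (ac_poly p) (\<alpha> i) = 0" if "i < degree p" for i
      unfolding less.prems using that by (rule poly_smult_prod_linear_root)
    then have eq: "(\<Prod>i<degree p. poly (ac_poly h) (\<alpha> i)) = (\<Prod>i<degree p. poly (ac_poly r) (\<alpha> i))"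
      by (simp add: r_def poly_ac_poly_mod_at_root)
    show ?thesis
    proof (cases "r = 0")
      case True
      then have "(\<Prod>i<degree p. poly (ac_poly h) (\<alpha> i)) = to_ac 0"
        using False eq by (simp add: prod_zero_iff)
      then show ?thesis by (metis rangeI)
    next
      case False
      obtain \<beta> where \<beta>: "ac_poly r = smult (to_ac (lead_coeff r)) (\<Prod>j<degree r. [:-\<beta> j, 1:])"
        using ac_poly_splits by blast
      have "degree r < degree p" using degree_mod_less'[OF \<open>p \<noteq> 0\<close> False[unfolded r_def]] by (simp add: r_def)
      then have "(\<Prod>j<degree r. poly (ac_poly p) (\<beta> j)) \<in> range to_ac"
        using less.hyps \<beta> by blast
      moreover have swap: "(\<Prod>i<degree p. poly (ac_poly r) (\<alpha> i)) * to_ac (lead_coeff p) ^ degree r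
        = (-1) ^ (degree p * degree r) * (\<Prod>j<degree r. poly (ac_poly p) (\<beta> j))
          * to_ac (lead_coeff r) ^ degree p"
        unfolding \<beta> less.prems by (rule prod_values_at_roots_swap)
      moreover have "(-1 :: 'a alg_closure) \<in> range to_ac" by (metis rangeI to_ac_1 to_ac_minus)
      ultimately have "(\<Prod>i<degree p. poly (ac_poly r) (\<alpha> i)) * to_ac (lead_coeff p) ^ degree r
          \<in> range to_ac"
        by (simp only: swap) (intro range_to_ac_mult range_to_ac_power; simp)
      then have "(\<Prod>i<degree p. poly (ac_poly r) (\<alpha> i)) * to_ac (lead_coeff p) ^ degree r
          / to_ac (lead_coeff p) ^ degree r \<in> range to_ac"
        by (intro range_to_ac_divide range_to_ac_power) auto
      then show ?thesis using \<open>p \<noteq> 0\<close> eq by simp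
    qed
  qed
qed

section \<open>Real closed fields: Laplace's proof and constancy of sign\<close>

definition ac_ii :: "'a::field alg_closure" where "ac_ii = (SOME y. y ^ 2 = -1)"

lemma ac_ii_square: "ac_ii * ac_ii = (-1 :: 'a::field alg_closure)"
proof -
  have "\<exists>y::'a alg_closure. y ^ 2 = -1" by (rule nth_root_exists) simp
  then have "(ac_ii::'a alg_closure) ^ 2 = -1" unfolding ac_ii_def by (rule someI_ex)
  then show ?thesis by (simp add: power2_eq_square)
qed

definition ac_cplx :: "'a::field alg_closure set" where
  "ac_cplx = {to_ac a + ac_ii * to_ac b | a b. True}"

lemma ac_cplxI: "to_ac a + ac_ii * to_ac b \<in> ac_cplx" unfolding ac_cplx_def by blast
lemma ac_cplxE: assumes "z \<in> ac_cplx" obtains a b where "z = to_ac a + ac_ii * to_ac b"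
  using assms unfolding ac_cplx_def by blast
lemma ac_cplx_to_ac[simp]: "to_ac a \<in> ac_cplx"
  using ac_cplxI[of a 0] by simp
lemma ac_cplx_of_nat[simp]: "of_nat n \<in> ac_cplx"
  using ac_cplx_to_ac[of "of_nat n"] by simp

lemma ac_cplx_add: assumes "z \<in> ac_cplx" "w \<in> ac_cplx" shows "z + w \<in> ac_cplx"
proof -
  obtain a b where z: "z = to_ac a + ac_ii * to_ac b" using assms(1) by (rule ac_cplxE)
  obtain c d where w: "w = to_ac c + ac_ii * to_ac d" using assms(2) by (rule ac_cplxE)
  have eq: "z + w = to_ac (a + c) + ac_ii * to_ac (b + d)" by (simp add: z w algebra_simps)
  show ?thesis by (subst eq) (rule ac_cplxI)
qed

lemma ac_cplx_diff: assumes "z \<in> ac_cplx" "w \<in> ac_cplx" shows "z - w \<in> ac_cplx"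
proof -
  obtain a b where z: "z = to_ac a + ac_ii * to_ac b" using assms(1) by (rule ac_cplxE)
  obtain c d where w: "w = to_ac c + ac_ii * to_ac d" using assms(2) by (rule ac_cplxE)
  have eq: "z - w = to_ac (a - c) + ac_ii * to_ac (b - d)" by (simp add: z w algebra_simps)
  show ?thesis by (subst eq) (rule ac_cplxI)
qed

lemma ac_ii_mult:
  "(A + ac_ii * B) * (C + ac_ii * D) = (A * C - B * D) + ac_ii * (A * D + B * C)"
  for A B C D :: "'a::field alg_closure"
proof -
  have "(A + ac_ii * B) * (C + ac_ii * D) = A * C + ac_ii * (A * D + B * C) + (ac_ii * ac_ii) * (B * D)"
    by (simp add: algebra_simps)
  then show ?thesis by (simp add: ac_ii_square)
qed

lemma ac_cplx_mult: assumes "z \<in> ac_cplx" "w \<in> ac_cplx" shows "z * w \<in> ac_cplx"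
proof -
  obtain a b where z: "z = to_ac a + ac_ii * to_ac b" using assms(1) by (rule ac_cplxE)
  obtain c d where w: "w = to_ac c + ac_ii * to_ac d" using assms(2) by (rule ac_cplxE)
  have eq: "z * w = to_ac (a * c - b * d) + ac_ii * to_ac (a * d + b * c)"
    by (simp add: z w ac_ii_mult)
  show ?thesis by (subst eq) (rule ac_cplxI)
qed

lemma ac_cplx_imag_eq_0:
  fixes a b :: "'a::linordered_field"
  assumes "to_ac a + ac_ii * to_ac b = 0"
  shows "b = 0"
proof (rule ccontr)
  assume b: "b \<noteq> 0"
  have "ac_ii * to_ac b = to_ac (- a)" using assms by (simp add: eq_neg_iff_add_eq_0 add.commute)
  then have e: "ac_ii = to_ac (- a / b)" using b by (simp add: field_simps)
  have "to_ac ((- a / b) * (- a / b)) = ac_ii * ac_ii" by (simp only: e to_ac_mult)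
  then have "to_ac ((- a / b) * (- a / b)) = to_ac (-1)" by (simp only: ac_ii_square to_ac_minus to_ac_1)
  then have "(- a / b) * (- a / b) = -1" by (simp only: to_ac_eq_iff)
  moreover have "(- a / b) * (- a / b) \<ge> 0" by simp
  ultimately show False by simp
qed

lemma rcf_complex_sqrt:
  fixes a b :: "'a::real_closed_field"
  shows "\<exists>x y. x * x - y * y = a \<and> 2 * x * y = b"
proof -
  obtain r0 where "a * a + b * b = r0 * r0"
    using rcf_square[of "a * a + b * b"] by (metis add_nonneg_nonneg zero_le_square)
  then obtain r where r: "r * r = a * a + b * b" "r \<ge> 0"
    by (metis abs_ge_zero abs_mult_self_eq)
  then have "a * a \<le> r * r" by simp
  then have "\<bar>a\<bar> \<le> r" using \<open>r \<ge> 0\<close> by (metis abs_ge_zero abs_le_square_iff abs_of_nonneg power2_eq_square)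
  then have "0 \<le> (r + a) / 2" "0 \<le> (r - a) / 2" by auto
  then obtain x y where x: "(r + a) / 2 = x * x" and y: "(r - a) / 2 = y * y"
    using rcf_square by meson
  have "(2 * x * y) * (2 * x * y) = 4 * (x * x) * (y * y)" by (simp add: algebra_simps)
  also have "\<dots> = r * r - a * a" by (simp flip: x y add: field_simps)
  finally have "(2 * x * y) * (2 * x * y) = b * b" using r(1) by simp
  then have "2 * x * y = b \<or> 2 * x * y = - b" unfolding square_eq_iff .
  then have "2 * x * y = b \<or> 2 * x * (- y) = b" by auto
  moreover have "x * x - y * y = a" "x * x - (- y) * (- y) = a" by (simp_all flip: x y add: field_simps)
  ultimately show ?thesis by blast
qed

lemma ac_cplx_sqrt:
  fixes z :: "'a::real_closed_field alg_closure"
  assumes "z \<in> ac_cplx" shows "\<exists>w\<in>ac_cplx. w * w = z"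
proof -
  obtain a b where z: "z = to_ac a + ac_ii * to_ac b" using assms by (rule ac_cplxE)
  obtain x y where xy: "x * x - y * y = a" "2 * x * y = b" using rcf_complex_sqrt by blast
  have "(to_ac x + ac_ii * to_ac y) * (to_ac x + ac_ii * to_ac y) =
     (to_ac x * to_ac x - to_ac y * to_ac y) + ac_ii * (to_ac x * to_ac y + to_ac y * to_ac x)"
    by (rule ac_ii_mult)
  also have "\<dots> = to_ac (x * x - y * y) + ac_ii * to_ac (2 * x * y)"
    by (simp add: algebra_simps)
  finally have "(to_ac x + ac_ii * to_ac y) * (to_ac x + ac_ii * to_ac y) = z" using xy z by simp
  then show ?thesis using ac_cplxI by blast
qed

lemma ac_cplx_quadratic_root:
  fixes s t \<alpha> :: "'a::real_closed_field alg_closure"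
  assumes "s \<in> ac_cplx" "t \<in> ac_cplx" "\<alpha> * \<alpha> - s * \<alpha> + t = 0"
  shows "\<alpha> \<in> ac_cplx"
proof -
  have "s * s - 4 * t \<in> ac_cplx"
    using assms by (intro ac_cplx_diff ac_cplx_mult) (auto simp: ac_cplx_of_nat[of 4, simplified])
  then obtain w where w: "w \<in> ac_cplx" "w * w = s * s - 4 * t" using ac_cplx_sqrt by blast
  have "(2 * \<alpha> - s) * (2 * \<alpha> - s) = 4 * (\<alpha> * \<alpha> - s * \<alpha> + t) + (s * s - 4 * t)"
    by (simp add: algebra_simps)
  then have "(2 * \<alpha> - s) * (2 * \<alpha> - s) = w * w" using assms(3) w(2) by simp
  then have "2 * \<alpha> - s = w \<or> 2 * \<alpha> - s = - w" unfolding square_eq_iff .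
  then have "\<alpha> = to_ac (1 / 2) * (s + w) \<or> \<alpha> = to_ac (1 / 2) * (s - w)"
    by (auto simp: field_simps)
  then show ?thesis
    using assms w by (metis ac_cplx_mult ac_cplx_add ac_cplx_diff ac_cplx_to_ac)
qed

lemma exists_two_power_times_odd: "n > 0 \<Longrightarrow> \<exists>k m. n = 2 ^ k * m \<and> odd (m::nat)"
proof (induction n rule: less_induct)
  case (less n)
  show ?case
  proof (cases "odd n")
    case True
    then show ?thesis by (intro exI[of _ 0] exI[of _ n]) simp
  next
    case False
    then obtain n' where n: "n = 2 * n'" by blast
    then have "n' < n" "n' > 0" using less.prems by auto
    then obtain k m where "n' = 2 ^ k * m" "odd m" using less.IH by blast
    then show ?thesis using n by (intro exI[of _ "Suc k"] exI[of _ m]) simp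
  qed
qed

lemma finite_ordered_pairs: "finite {(i, j). i < j \<and> j < (n::nat)}"
  by (rule finite_subset[of _ "{..<n} \<times> {..<n}"]) auto

lemma card_ordered_pairs: "card {(i, j). i < j \<and> j < (n::nat)} * 2 = n * (n - 1)"
proof (induction n)
  case 0
  then show ?case by simp
next
  case (Suc n)
  have eq: "{(i, j). i < j \<and> j < Suc n} = {(i, j). i < j \<and> j < n} \<union> (\<lambda>i. (i, n)) ` {..<n}"
    by auto
  have "card {(i, j). i < j \<and> j < Suc n} = card {(i, j). i < j \<and> j < n} + card ((\<lambda>i. (i, n)) ` {..<n})"
    unfolding eq by (rule card_Un_disjoint) (auto simp: finite_ordered_pairs)
  also have "card ((\<lambda>i. (i, n)) ` {..<n}) = n"
    by (subst card_image) (auto simp: inj_on_def)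
  finally show ?case using Suc.IH by (cases n) (auto simp: algebra_simps)
qed

lemma prod_square_split_pairs:
  fixes g :: "nat \<Rightarrow> nat \<Rightarrow> 'b::comm_monoid_mult"
  assumes sym: "\<And>i j. g i j = g j i"
  shows "(\<Prod>i<n. \<Prod>j<n. g i j) = (\<Prod>i<n. g i i) * (\<Prod>(i, j)\<in>{(i, j). i < j \<and> j < n}. g i j) ^ 2"
proof -
  define P where "P = {(i, j). i < j \<and> j < n}"
  define D where "D = (\<lambda>i. (i, i)) ` {..<n}"
  have fin: "finite P" "finite D" "finite (prod.swap ` P)"
    unfolding P_def D_def using finite_ordered_pairs by auto
  have "(\<Prod>i<n. \<Prod>j<n. g i j) = (\<Prod>(i, j)\<in>{..<n} \<times> {..<n}. g i j)"
    by (simp add: prod.cartesian_product)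
  also have "{..<n} \<times> {..<n} = D \<union> (P \<union> prod.swap ` P)"
    unfolding D_def P_def by auto
  also have "(\<Prod>(i, j)\<in>D \<union> (P \<union> prod.swap ` P). g i j) =
      (\<Prod>(i, j)\<in>D. g i j) * ((\<Prod>(i, j)\<in>P. g i j) * (\<Prod>(i, j)\<in>prod.swap ` P. g i j))"
    using fin by (subst prod.union_disjoint, auto simp: D_def P_def,
        subst prod.union_disjoint, auto)
  also have "(\<Prod>(i, j)\<in>D. g i j) = (\<Prod>i<n. g i i)"
    unfolding D_def by (subst prod.reindex) (auto simp: inj_on_def)
  also have "(\<Prod>(i, j)\<in>prod.swap ` P. g i j) = (\<Prod>(i, j)\<in>P. g i j)"
    by (subst prod.reindex) (auto simp: sym case_prod_beta)
  finally show ?thesis by (simp add: P_def power2_eq_square)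
qed

lemma sum_coeff_homogenized:
  fixes P :: "'b::field poly"
  assumes P: "P = smult c (\<Prod>j<n. [:-\<alpha> j, 1:])"
  shows "(\<Sum>k\<le>n. coeff P k * u ^ k * v ^ (n - k)) = c * (\<Prod>j<n. u - \<alpha> j * v)"
proof (cases "c = 0")
  case True
  then show ?thesis using P by simp
next
  case c: False
  have degP: "degree P = n" using P c by (simp add: degree_smult_eq)
  have lcP: "coeff P n = c" using P c degP by (metis lead_coeff_prod_linear lead_coeff_smult mult.right_neutral)
  show ?thesis
  proof (cases "v = 0")
    case True
    have "(\<Sum>k\<le>n. coeff P k * u ^ k * v ^ (n - k)) = (\<Sum>k\<in>insert n {..<n}. coeff P k * u ^ k * v ^ (n - k))"
      by (rule sum.cong) auto
    also have "\<dots> = coeff P n * u ^ n + (\<Sum>k<n. coeff P k * u ^ k * v ^ (n - k))"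
      by simp
    also have "(\<Sum>k<n. coeff P k * u ^ k * v ^ (n - k)) = 0"
      using True by (intro sum.neutral) auto
    finally show ?thesis using True lcP by (simp add: prod_constant)
  next
    case False
    have "(\<Sum>k\<le>n. coeff P k * u ^ k * v ^ (n - k)) = (\<Sum>k\<le>n. v ^ n * (coeff P k * (u / v) ^ k))"
    proof (rule sum.cong)
      fix k assume "k \<in> {..n}"
      then have "v ^ n = v ^ k * v ^ (n - k)" by (simp add: power_add[symmetric])
      then show "coeff P k * u ^ k * v ^ (n - k) = v ^ n * (coeff P k * (u / v) ^ k)"
        using False by (simp add: power_divide field_simps)
    qed simp
    also have "\<dots> = v ^ n * poly P (u / v)"
      by (simp add: poly_altdef degP sum_distrib_left)
    also have "\<dots> = c * (\<Prod>j<n. v * (u / v - \<alpha> j))"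
      by (simp add: P prod.distrib prod_constant poly_prod)
    also have "(\<Prod>j<n. v * (u / v - \<alpha> j)) = (\<Prod>j<n. u - \<alpha> j * v)"
      using False by (intro prod.cong) (auto simp: field_simps)
    finally show ?thesis .
  qed
qed

definition pair_poly :: "nat \<Rightarrow> (nat \<Rightarrow> 'a::comm_ring_1) \<Rightarrow> nat \<Rightarrow> 'a poly" where
  "pair_poly c \<alpha> n =
    (\<Prod>(i, j)\<in>{(i, j). i < j \<and> j < n}. [:-(\<alpha> i + \<alpha> j + of_nat c * \<alpha> i * \<alpha> j), 1:])"

lemma degree_pair_poly: "degree (pair_poly c \<alpha> n :: 'a::idom poly) = card {(i, j). i < j \<and> j < n}"
  by (simp add: pair_poly_def degree_prod_eq_sum_degree case_prod_beta)

lemma poly_pair_poly_eq_0_iff: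
  "poly (pair_poly c \<alpha> n) z = (0 :: 'a::idom) \<longleftrightarrow>
    (\<exists>(i, j)\<in>{(i, j). i < j \<and> j < n}. z = \<alpha> i + \<alpha> j + of_nat c * \<alpha> i * \<alpha> j)"
proof -
  have "poly (pair_poly c \<alpha> n) z
      = (\<Prod>(i, j)\<in>{(i, j). i < j \<and> j < n}. z - (\<alpha> i + \<alpha> j + of_nat c * \<alpha> i * \<alpha> j))"
    unfolding pair_poly_def poly_prod by (intro prod.cong) auto
  then show ?thesis using finite_ordered_pairs[of n] by (simp add: prod_zero_iff case_prod_beta)
qed

lemma poly_pair_poly_square_in_range:
  fixes p :: "'a::field poly"
  assumes \<alpha>: "ac_poly p = smult (to_ac (lead_coeff p)) (\<Prod>i<degree p. [:-\<alpha> i, 1:])"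
    and "p \<noteq> 0"
    and nz: "(\<Prod>i<degree p. to_ac x - (\<alpha> i + \<alpha> i + of_nat c * \<alpha> i * \<alpha> i)) \<noteq> 0"
  shows "poly (pair_poly c \<alpha> (degree p) ^ 2) (to_ac x) \<in> range to_ac"
proof -
  define n where "n = degree p"
  define \<beta> where "\<beta> i j = \<alpha> i + \<alpha> j + of_nat c * \<alpha> i * \<alpha> j" for i j
  define h where "h = smult (1 / lead_coeff p)
    (\<Sum>k\<le>n. smult (coeff p k) ([:x, -1:] ^ k * [:1, of_nat c:] ^ (n - k)))"
  have "poly (ac_poly h) (\<alpha> i) = (\<Prod>j<n. to_ac x - \<beta> i j)" for i
  proof -
    have "poly (ac_poly h) (\<alpha> i) = to_ac (1 / lead_coeff p) * (\<Sum>k\<le>n. coeff (ac_poly p) k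
        * (to_ac x - \<alpha> i) ^ k * (1 + of_nat c * \<alpha> i) ^ (n - k))"
      by (simp add: h_def poly_sum poly_power algebra_simps)
    also have "\<dots> = (\<Prod>j<n. (to_ac x - \<alpha> i) - \<alpha> j * (1 + of_nat c * \<alpha> i))"
      unfolding n_def using \<open>p \<noteq> 0\<close> by (subst sum_coeff_homogenized[OF \<alpha>]) simp
    finally show ?thesis by (simp add: \<beta>_def algebra_simps)
  qed
  then have full: "(\<Prod>i<n. \<Prod>j<n. to_ac x - \<beta> i j) \<in> range to_ac"
    using prod_values_at_roots_in_range[OF \<alpha>, of h] by (simp add: n_def)
  have diag: "(\<Prod>i<n. to_ac x - \<beta> i i) \<in> range to_ac"
    using prod_values_at_roots_in_range[OF \<alpha>, of "[:x, -2, - of_nat c:]"]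
    by (simp add: n_def \<beta>_def algebra_simps)
  have "poly (pair_poly c \<alpha> n) (to_ac x)
      = (\<Prod>(i, j)\<in>{(i, j). i < j \<and> j < n}. to_ac x - \<beta> i j)"
    unfolding pair_poly_def poly_prod by (intro prod.cong) (auto simp: \<beta>_def)
  then have "(\<Prod>i<n. \<Prod>j<n. to_ac x - \<beta> i j)
      = (\<Prod>i<n. to_ac x - \<beta> i i) * poly (pair_poly c \<alpha> n ^ 2) (to_ac x)"
    unfolding poly_power by (simp add: prod_square_split_pairs \<beta>_def algebra_simps)
  moreover have "(\<Prod>i<n. to_ac x - \<beta> i i) \<noteq> 0" using nz by (simp add: n_def \<beta>_def)
  ultimately have "poly (pair_poly c \<alpha> n ^ 2) (to_ac x)
      = (\<Prod>i<n. \<Prod>j<n. to_ac x - \<beta> i j) / (\<Prod>i<n. to_ac x - \<beta> i i)"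
    by simp
  then show ?thesis using full diag range_to_ac_divide by (simp add: n_def)
qed

lemma pair_poly_in_range:
  fixes p :: "'a::field_char_0 poly"
  assumes \<alpha>: "ac_poly p = smult (to_ac (lead_coeff p)) (\<Prod>i<degree p. [:-\<alpha> i, 1:])"
    and "p \<noteq> 0"
  shows "pair_poly c \<alpha> (degree p) \<in> range ac_poly"
proof -
  define Z where "Z = to_ac -` (\<lambda>i. \<alpha> i + \<alpha> i + of_nat c * \<alpha> i * \<alpha> i) ` {..<degree p}"
  have "finite Z" unfolding Z_def by (rule finite_vimageI) (auto simp: inj_to_ac)
  then have "infinite (UNIV - Z)" using infinite_UNIV_char_0 by (rule Diff_infinite_finite)
  then have "pair_poly c \<alpha> (degree p) ^ 2 \<in> range ac_poly"
  proof (rule ac_poly_of_values)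
    fix x assume "x \<in> UNIV - Z"
    then have "(\<Prod>i<degree p. to_ac x - (\<alpha> i + \<alpha> i + of_nat c * \<alpha> i * \<alpha> i)) \<noteq> 0"
      by (auto simp: Z_def)
    then show "poly (pair_poly c \<alpha> (degree p) ^ 2) (to_ac x) \<in> range to_ac"
      by (rule poly_pair_poly_square_in_range[OF \<alpha> \<open>p \<noteq> 0\<close>])
  qed
  moreover have "lead_coeff (pair_poly c \<alpha> (degree p)) = 1"
    by (simp add: pair_poly_def lead_coeff_prod case_prod_beta)
  ultimately show ?thesis by (simp add: ac_poly_of_square power2_eq_square)
qed

lemma root_in_ac_cplx_of_pair_roots:
  fixes \<alpha> :: "nat \<Rightarrow> 'a::real_closed_field alg_closure"
  assumes "\<And>c. \<exists>(i, j)\<in>{(i, j). i < j \<and> j < n}. \<alpha> i + \<alpha> j + of_nat c * \<alpha> i * \<alpha> j \<in> ac_cplx"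
  shows "\<exists>i<n. \<alpha> i \<in> ac_cplx"
proof -
  define Pairs where "Pairs = {(i, j). i < j \<and> j < n}"
  define \<beta> where "\<beta> c = (\<lambda>(i, j). \<alpha> i + \<alpha> j + of_nat c * \<alpha> i * \<alpha> j)" for c :: nat
  have "\<forall>c. \<exists>pr. pr \<in> Pairs \<and> \<beta> c pr \<in> ac_cplx"
    using assms by (auto simp: Pairs_def \<beta>_def)
  then obtain f where f: "\<forall>c. f c \<in> Pairs \<and> \<beta> c (f c) \<in> ac_cplx"
    by (rule choice[THEN exE])
  have "\<not> inj f"
  proof
    assume "inj f"
    then have "infinite (range f)" using finite_imageD infinite_UNIV_nat by blast
    moreover have "range f \<subseteq> Pairs" using f by auto
    ultimately show False using finite_ordered_pairs[of n] finite_subset unfolding Pairs_def by blast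
  qed
  then obtain c1 c2 where "c1 \<noteq> c2" "f c1 = f c2" unfolding inj_def by blast
  obtain i j where "f c1 = (i, j)" by (cases "f c1")
  then have "i < n" and b: "\<beta> c1 (i, j) \<in> ac_cplx" "\<beta> c2 (i, j) \<in> ac_cplx"
    using f \<open>f c1 = f c2\<close> by (auto simp: Pairs_def dest: spec[of _ c1] spec[of _ c2])
  have prod_eq: "\<alpha> i * \<alpha> j = to_ac (1 / (of_nat c1 - of_nat c2)) * (\<beta> c1 (i, j) - \<beta> c2 (i, j))"
    using \<open>c1 \<noteq> c2\<close> by (simp add: \<beta>_def field_simps)
  have prod: "\<alpha> i * \<alpha> j \<in> ac_cplx"
    unfolding prod_eq by (intro ac_cplx_mult ac_cplx_diff ac_cplx_to_ac b)
  have sum_eq: "\<alpha> i + \<alpha> j = \<beta> c1 (i, j) - of_nat c1 * (\<alpha> i * \<alpha> j)"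
    by (simp add: \<beta>_def algebra_simps)
  have sum: "\<alpha> i + \<alpha> j \<in> ac_cplx"
    unfolding sum_eq by (intro ac_cplx_mult ac_cplx_diff ac_cplx_of_nat b prod)
  have "\<alpha> i * \<alpha> i - (\<alpha> i + \<alpha> j) * \<alpha> i + \<alpha> i * \<alpha> j = 0"
    by (simp add: algebra_simps)
  then show ?thesis using ac_cplx_quadratic_root[OF sum prod] \<open>i < n\<close> by blast
qed

theorem ac_poly_has_root_in_ac_cplx:
  fixes p :: "'a::real_closed_field poly"
  assumes "degree p > 0"
  shows "\<exists>z\<in>ac_cplx. poly (ac_poly p) z = 0"
proof -
  obtain k m where "degree p = 2 ^ k * m" "odd m" using exists_two_power_times_odd assms by blast
  then show ?thesis using assms
  proof (induction k arbitrary: p m)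
    case 0
    then have "p \<noteq> 0" by auto
    with 0 obtain x where "(\<Sum>i\<le>degree p. coeff p i * x ^ i) = 0"
      using rcf_odd_root[of "degree p" "coeff p"] by auto
    then have "poly p x = 0" by (simp add: poly_altdef)
    then have "poly (ac_poly p) (to_ac x) = 0" by simp
    then show ?case using ac_cplx_to_ac by blast
  next
    case (Suc k)
    define n where "n = degree p"
    have "p \<noteq> 0" "even n" "n \<ge> 2" using Suc.prems by (auto simp: n_def)
    obtain \<alpha> where \<alpha>: "ac_poly p = smult (to_ac (lead_coeff p)) (\<Prod>i<n. [:-\<alpha> i, 1:])"
      using ac_poly_splits unfolding n_def by blast
    have card: "card {(i, j). i < j \<and> j < n} = 2 ^ k * (m * (n - 1))"
      using card_ordered_pairs[of n] Suc.prems(1) by (simp add: n_def)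
    have "\<exists>(i, j)\<in>{(i, j). i < j \<and> j < n}. \<alpha> i + \<alpha> j + of_nat c * \<alpha> i * \<alpha> j \<in> ac_cplx" for c
    proof -
      obtain q where q: "ac_poly q = pair_poly c \<alpha> n"
        using pair_poly_in_range[OF \<alpha>[unfolded n_def] \<open>p \<noteq> 0\<close>] unfolding n_def
        by (metis (no_types) rangeE)
      have "degree q = 2 ^ k * (m * (n - 1))" "odd (m * (n - 1))"
        using card Suc.prems(2) \<open>even n\<close> \<open>n \<ge> 2\<close> degree_ac_poly[of q]
        by (simp_all add: q degree_pair_poly)
      moreover from this have "degree q > 0" using \<open>n \<ge> 2\<close> by (simp add: odd_pos)
      ultimately obtain z where "z \<in> ac_cplx" "poly (ac_poly q) z = 0"
        using Suc.IH by blast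
      then show ?thesis by (auto simp: q poly_pair_poly_eq_0_iff)
    qed
    then obtain i where "i < n" "\<alpha> i \<in> ac_cplx" using root_in_ac_cplx_of_pair_roots by blast
    moreover have "poly (ac_poly p) (\<alpha> i) = 0"
      unfolding \<alpha> using \<open>i < n\<close> by (rule poly_smult_prod_linear_root)
    ultimately show ?case by blast
  qed
qed

lemma quadratic_dvd_of_ac_cplx_root:
  fixes p :: "'a::real_closed_field poly"
  assumes root: "poly (ac_poly p) (to_ac s + ac_ii * to_ac t) = 0" and "t \<noteq> 0"
  shows "[:s * s + t * t, - 2 * s, 1:] dvd p"
proof -
  define z where "z = to_ac s + ac_ii * to_ac t"
  define q where "q = [:s * s + t * t, - 2 * s, 1:]"
  define r where "r = p mod q"
  have "q \<noteq> 0" "degree q = 2" by (simp_all add: q_def)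
  then have "r = 0 \<or> degree r < 2"
    using degree_mod_less'[OF \<open>q \<noteq> 0\<close>, of p] by (auto simp: r_def)
  then have r: "r = [:coeff r 0, coeff r 1:]"
    by (intro poly_eqI) (auto simp: coeff_pCons coeff_eq_0 split: nat.split)
  have "poly (ac_poly q) z = (z - to_ac s) * (z - to_ac s) + to_ac t * to_ac t"
    by (simp add: q_def algebra_simps)
  also have "\<dots> = (ac_ii * ac_ii) * (to_ac t * to_ac t) + to_ac t * to_ac t"
    by (simp add: z_def algebra_simps)
  finally have "poly (ac_poly q) z = 0" by (simp add: ac_ii_square)
  then have "poly (ac_poly r) z = 0" using root by (simp add: z_def r_def poly_ac_poly_mod_at_root)
  then have "to_ac (coeff r 0) + to_ac (coeff r 1) * z = 0"
    by (subst (asm) r) (simp add: algebra_simps)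
  then have re_im: "to_ac (coeff r 0 + coeff r 1 * s) + ac_ii * to_ac (coeff r 1 * t) = 0"
    by (simp add: z_def algebra_simps)
  then have "coeff r 1 * t = 0" by (rule ac_cplx_imag_eq_0)
  then have "coeff r 1 = 0" using \<open>t \<noteq> 0\<close> by simp
  moreover from this have "coeff r 0 = 0" using re_im by simp
  ultimately have "r = 0" by (subst r) simp
  then show ?thesis by (simp add: r_def q_def mod_eq_0_iff_dvd)
qed

lemma rcf_poly_factor:
  fixes p :: "'a::real_closed_field poly"
  assumes "degree p > 0"
  obtains s d where "p = [:-s, 1:] * d"
    | q d where "p = q * d" "degree q = 2" "\<And>x. poly q x > 0"
proof -
  obtain z where "z \<in> ac_cplx" "poly (ac_poly p) z = 0"
    using ac_poly_has_root_in_ac_cplx[OF assms] by blast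
  then obtain s t where z: "poly (ac_poly p) (to_ac s + ac_ii * to_ac t) = 0"
    by (auto elim: ac_cplxE)
  show ?thesis
  proof (cases "t = 0")
    case True
    then have "poly p s = 0" using z by simp
    then show ?thesis using that(1) by (metis dvdE poly_eq_0_iff_dvd)
  next
    case False
    define q where "q = [:s * s + t * t, - 2 * s, 1:]"
    have "poly q x = (x - s) * (x - s) + t * t" for x by (simp add: q_def algebra_simps)
    moreover have "t * t > 0" using False by (auto simp: zero_less_mult_iff linorder_neq_iff)
    ultimately have "poly q x > 0" for x by (metis add_nonneg_pos zero_le_square)
    moreover have "degree q = 2" by (simp add: q_def)
    moreover obtain d where "p = q * d"
      using quadratic_dvd_of_ac_cplx_root[OF z False] by (auto simp: q_def elim: dvdE)
    ultimately show ?thesis using that(2) by blast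
  qed
qed

lemma sgn_poly_eq_if_no_roots:
  fixes p :: "'a::real_closed_field poly"
  assumes "u \<le> v" "\<And>x. u \<le> x \<Longrightarrow> x \<le> v \<Longrightarrow> poly p x \<noteq> 0"
  shows "sgn (poly p u) = sgn (poly p v)"
  using assms(2)
proof (induction "degree p" arbitrary: p rule: less_induct)
  case less
  show ?case
  proof (cases "degree p = 0")
    case True
    then show ?thesis by (auto elim: degree_eq_zeroE)
  next
    case False
    then have "p \<noteq> 0" by auto
    show ?thesis
    proof (rule rcf_poly_factor[of p])
      fix s d assume p: "p = [:-s, 1:] * d"
      then have "d \<noteq> 0" using \<open>p \<noteq> 0\<close> by auto
      then have "degree d < degree p" using p by (simp add: degree_mult_eq del: mult_pCons_left)
      moreover have "poly d x \<noteq> 0" if "u \<le> x" "x \<le> v" for x using less.prems[OF that] p by auto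
      ultimately have "sgn (poly d u) = sgn (poly d v)" using less.hyps by blast
      moreover have "poly p s = 0" using p by simp
      then have "s < u \<or> v < s" using less.prems[of s] by linarith
      then have "sgn (u - s) = sgn (v - s)" using \<open>u \<le> v\<close> by auto
      moreover have "poly p x = (x - s) * poly d x" for x
        by (simp add: p algebra_simps del: mult_pCons_left)
      ultimately show ?thesis by (simp add: sgn_mult)
    next
      fix q d assume p: "p = q * d" and "degree q = 2" and q: "\<And>x. poly q x > 0"
      then have "d \<noteq> 0" "degree d < degree p" using \<open>p \<noteq> 0\<close> by (auto simp: degree_mult_eq)
      moreover have "poly d x \<noteq> 0" if "u \<le> x" "x \<le> v" for x using less.prems[OF that] p by auto
      ultimately have "sgn (poly d u) = sgn (poly d v)" using less.hyps by blast
      then show ?thesis using p q[of u] q[of v] by (simp add: sgn_mult)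
    qed (use False in simp)
  qed
qed

section \<open>Laurent germs and local Cauchy indices\<close>

abbreviation fls_lead :: "'a::zero fls \<Rightarrow> 'a" where
  "fls_lead f \<equiv> f $$ fls_subdegree f"

lemma fls_lead_mult:
  fixes f g :: "'a::semiring_no_zero_divisors fls"
  assumes "f \<noteq> 0" "g \<noteq> 0"
  shows "fls_lead (f * g) = fls_lead f * fls_lead g"
  using assms by simp

lemma fls_lead_add_less:
  fixes f g :: "'a::monoid_add fls"
  assumes "f \<noteq> 0" "fls_subdegree f < fls_subdegree g"
  shows "fls_subdegree (f + g) = fls_subdegree f" "fls_lead (f + g) = fls_lead f"
  using assms by (simp_all add: fls_subdegree_add_eq1)

lemma fls_times_nth_0:
  fixes f g :: "'a::{comm_monoid_add,mult_zero} fls"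
  assumes "fls_subdegree f \<ge> 0" "fls_subdegree g \<ge> 0"
  shows "(f * g) $$ 0 = f $$ 0 * g $$ 0"
proof (cases "fls_subdegree f = 0 \<and> fls_subdegree g = 0")
  case True
  then show ?thesis using fls_times_base[of f g] by simp
next
  case False
  then have "0 < fls_subdegree f + fls_subdegree g" "f $$ 0 = 0 \<or> g $$ 0 = 0"
    using assms by auto
  then show ?thesis by (auto simp: fls_times_nth_eq0)
qed

lemma sgn_fls_lead_divide:
  fixes f g :: "'a::linordered_field fls"
  shows "sgn (fls_lead (f / g)) = sgn (fls_lead f * fls_lead g)"
  by (cases "f = 0 \<or> g = 0")
    (auto simp: fls_divide_subdegree fls_divide_nth_base sgn_mult sgn_divide)

definition pole_jump :: "'a::linordered_field fls \<Rightarrow> 'a" where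
  "pole_jump f = (if fls_subdegree f < 0 then sgn (fls_lead f) / 2 else 0)"

lemma pole_jump_0 [simp]: "pole_jump 0 = 0"
  by (simp add: pole_jump_def)

lemma pole_jump_divide:
  fixes f g :: "'a::linordered_field fls"
  shows "pole_jump (f / g) =
    (if fls_subdegree f < fls_subdegree g then sgn (fls_lead f * fls_lead g) / 2 else 0)"
proof (cases "f = 0 \<or> g = 0")
  case True
  then show ?thesis by (auto simp: pole_jump_def)
next
  case False
  then show ?thesis
    by (simp add: pole_jump_def fls_divide_subdegree fls_divide_nth_base sgn_mult sgn_divide)
qed

lemma sgn_mult_cot_add:
  fixes c d e :: "'a::linordered_field"
  assumes "c \<noteq> 0" "d \<noteq> 0" "e \<noteq> 0" "e = c \<or> e = d \<or> e = c + d \<or> c + d = 0"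
  shows "sgn (c * d * e) = sgn c + sgn d - sgn e"
  using assms by (auto simp: sgn_if mult_less_0_iff zero_less_mult_iff)

lemma pole_jump_cot_add_two_poles:
  fixes f g :: "'a::linordered_field fls"
  assumes f: "fls_subdegree f < 0" and g: "fls_subdegree g < 0" and fg: "f + g \<noteq> 0"
  shows "pole_jump ((f * g - 1) / (f + g))
    = pole_jump f + pole_jump g - sgn (fls_lead (f + g)) / 2"
proof -
  have "f \<noteq> 0" "g \<noteq> 0" using f g by auto
  define N where "N = f * g - 1"
  have "fls_subdegree (f * g) < fls_subdegree (1 :: 'a fls)"
    using \<open>f \<noteq> 0\<close> \<open>g \<noteq> 0\<close> f g by simp
  then have N: "fls_subdegree N = fls_subdegree f + fls_subdegree g"
    "fls_lead N = fls_lead f * fls_lead g"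
    using \<open>f \<noteq> 0\<close> \<open>g \<noteq> 0\<close> f g by (simp_all add: N_def fls_subdegree_diff_eq1)
  have below: "fls_subdegree N < fls_subdegree (f + g)"
    using fls_plus_subdegree[OF fg] f g N(1) by linarith
  have lead_sum: "fls_lead (f + g) = fls_lead f \<or> fls_lead (f + g) = fls_lead g
      \<or> fls_lead (f + g) = fls_lead f + fls_lead g \<or> fls_lead f + fls_lead g = 0"
  proof (cases "fls_subdegree f" "fls_subdegree g" rule: linorder_cases)
    case less
    then show ?thesis using fls_lead_add_less[OF \<open>f \<noteq> 0\<close>] by simp
  next
    case greater
    then show ?thesis using fls_lead_add_less[OF \<open>g \<noteq> 0\<close>] by (simp add: add.commute)
  next
    case equal
    then have "(f + g) $$ fls_subdegree f = fls_lead f + fls_lead g" by simp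
    moreover have "fls_subdegree (f + g) = fls_subdegree f" if "fls_lead f + fls_lead g \<noteq> 0"
      using that fls_plus_subdegree[OF fg] equal by (metis calculation fls_subdegree_leI min.idem order.antisym)
    ultimately show ?thesis by metis
  qed
  have "sgn (fls_lead N * fls_lead (f + g))
      = sgn (fls_lead f) + sgn (fls_lead g) - sgn (fls_lead (f + g))"
    unfolding N(2) using \<open>f \<noteq> 0\<close> \<open>g \<noteq> 0\<close> nth_fls_subdegree_nonzero[OF fg] lead_sum
    by (intro sgn_mult_cot_add) auto
  moreover have "pole_jump (N / (f + g)) = sgn (fls_lead N * fls_lead (f + g)) / 2"
    using below by (simp only: pole_jump_divide if_True)
  moreover have "pole_jump f = sgn (fls_lead f) / 2" "pole_jump g = sgn (fls_lead g) / 2"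
    using f g by (simp_all add: pole_jump_def)
  ultimately show ?thesis unfolding N_def[symmetric] by linarith
qed

lemma pole_jump_cot_add_one_pole:
  fixes f g :: "'a::linordered_field fls"
  assumes f: "fls_subdegree f < 0" and g: "g \<noteq> 0" "fls_subdegree g \<ge> 0"
  shows "pole_jump ((f * g - 1) / (f + g)) = 0"
proof -
  have "f \<noteq> 0" using f by auto
  have "fls_subdegree f \<le> fls_subdegree (f * g - 1)" if "f * g - 1 \<noteq> 0"
    using fls_subdegree_minus[OF that] \<open>f \<noteq> 0\<close> f g by simp
  moreover have "fls_subdegree (f + g) = fls_subdegree f"
    using fls_lead_add_less(1)[OF \<open>f \<noteq> 0\<close>] f g by simp
  ultimately show ?thesis by (cases "f * g - 1 = 0") (auto simp: pole_jump_divide)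
qed

lemma pole_jump_cot_add_no_pole:
  fixes f g :: "'a::linordered_field fls"
  assumes f: "fls_subdegree f \<ge> 0" and g: "fls_subdegree g \<ge> 0" and fg: "f + g \<noteq> 0"
  shows "pole_jump ((f * g - 1) / (f + g))
    = (if fls_subdegree (f + g) = 0 then 0 else - sgn (fls_lead (f + g)) / 2)"
proof -
  define N where "N = f * g - 1"
  have N_ge: "0 \<le> fls_subdegree N" if "N \<noteq> 0"
    using fls_subdegree_minus[OF that[unfolded N_def]] fls_mult_subdegree_ge[of f g] f g
    by (cases "f * g = 0") (auto simp: N_def)
  have sum_ge: "0 \<le> fls_subdegree (f + g)"
    using fls_plus_subdegree[OF fg] f g by linarith
  show ?thesis
  proof (cases "fls_subdegree (f + g) = 0")
    case True
    then show ?thesis using N_ge by (cases "N = 0") (auto simp: pole_jump_divide N_def)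
  next
    case False
    then have "(f + g) $$ 0 = 0"
      using sum_ge by (intro fls_eq0_below_subdegree) linarith
    then have "g $$ 0 = - (f $$ 0)"
      by (simp add: eq_neg_iff_add_eq_0 add.commute)
    then have "N $$ 0 = - (f $$ 0 * f $$ 0) - 1"
      using fls_times_nth_0[OF f g] by (simp add: N_def)
    then have N0: "N $$ 0 < 0"
      using zero_le_square[of "f $$ 0"] by linarith
    then have "fls_subdegree N = 0"
      using N_ge by (metis fls_subdegree_leI fls_zero_nth order.antisym order.irrefl)
    then show ?thesis
      using N0 False sum_ge
      by (simp add: pole_jump_divide N_def[symmetric] sgn_mult)
  qed
qed

lemma pole_jump_cot_add:
  fixes f g :: "'a::linordered_field fls"
  assumes "f \<noteq> 0" "g \<noteq> 0" "f + g \<noteq> 0"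
  shows "pole_jump ((f * g - 1) / (f + g))
    = pole_jump f + pole_jump g - sgn (fls_lead (f + g)) / 2
      + (if fls_subdegree (f + g) = 0
            \<and> \<not> (fls_subdegree f = fls_subdegree g \<and> fls_subdegree f < 0)
         then sgn (fls_lead (f + g)) / 2 else 0)"
proof -
  consider "fls_subdegree f < 0" "fls_subdegree g < 0"
    | "fls_subdegree f < 0" "fls_subdegree g \<ge> 0"
    | "fls_subdegree f \<ge> 0" "fls_subdegree g < 0"
    | "fls_subdegree f \<ge> 0" "fls_subdegree g \<ge> 0"
    by linarith
  then show ?thesis
  proof cases
    case 1
    have "fls_subdegree f = fls_subdegree g" if "fls_subdegree (f + g) = 0"
    proof (rule ccontr)
      assume "fls_subdegree f \<noteq> fls_subdegree g"
      then have "fls_subdegree (f + g) = min (fls_subdegree f) (fls_subdegree g)"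
        using fls_lead_add_less(1)[OF \<open>f \<noteq> 0\<close>, of g] fls_lead_add_less(1)[OF \<open>g \<noteq> 0\<close>, of f]
        by (auto simp: add.commute min_def)
      then show False using that 1 by linarith
    qed
    then show ?thesis using pole_jump_cot_add_two_poles[OF 1 \<open>f + g \<noteq> 0\<close>] 1 by auto
  next
    case 2
    then show ?thesis
      using pole_jump_cot_add_one_pole[OF _ \<open>g \<noteq> 0\<close>] fls_lead_add_less[OF \<open>f \<noteq> 0\<close>]
      by (simp add: pole_jump_def)
  next
    case 3
    then show ?thesis
      using pole_jump_cot_add_one_pole[OF _ \<open>f \<noteq> 0\<close>, of g] fls_lead_add_less[OF \<open>g \<noteq> 0\<close>, of f]
      by (simp add: pole_jump_def add.commute mult.commute)
  next
    case 4
    then show ?thesis using pole_jump_cot_add_no_pole[OF _ _ \<open>f + g \<noteq> 0\<close>]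
      by (simp add: pole_jump_def)
  qed
qed

definition germ :: "'a::field \<Rightarrow> 'a \<Rightarrow> 'a poly \<Rightarrow> 'a fls" where
  "germ e x p = fps_to_fls (fps_of_poly (p \<circ>\<^sub>p [:x, e:]))"

lemma germ_0 [simp]: "germ e x 0 = 0"
  by (simp add: germ_def)

lemma germ_add: "germ e x (p + q) = germ e x p + germ e x q"
  by (simp add: germ_def pcompose_add fps_of_poly_add)

lemma germ_diff: "germ e x (p - q) = germ e x p - germ e x q"
  by (simp add: germ_def pcompose_diff fps_of_poly_diff)

lemma germ_mult: "germ e x (p * q) = germ e x p * germ e x q"
  by (simp add: germ_def pcompose_mult fps_of_poly_mult fls_times_fps_to_fls)

lemma germ_eq_0_iff: "e \<noteq> 0 \<Longrightarrow> germ e x p = 0 \<longleftrightarrow> p = 0"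
  using fps_of_poly_eq_iff[of "p \<circ>\<^sub>p [:x, e:]" 0] by (simp add: germ_def pcompose_eq_0_iff)

lemma cofac_decomp: "p = [:-x, 1:] ^ order x p * cofac x p"
  by (simp add: cofac_def order_1)

lemma poly_cofac_nonzero:
  assumes "p \<noteq> 0"
  shows "poly (cofac x p) x \<noteq> 0"
proof
  assume "poly (cofac x p) x = 0"
  then obtain r where "cofac x p = [:-x, 1:] * r"
    by (auto simp: poly_eq_0_iff_dvd elim: dvdE)
  then have "p = [:-x, 1:] ^ Suc (order x p) * r"
    using cofac_decomp[of p x] by (simp only: power_Suc2 mult.assoc)
  then show False using order_2[OF assms] by (metis dvd_triv_left)
qed

lemma pcompose_power: "(p ^ n) \<circ>\<^sub>p q = (p \<circ>\<^sub>p q) ^ n"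
  by (induction n) (simp_all add: pcompose_1 pcompose_mult)

lemma germ_nth:
  "germ e x p $$ n = (if n < int (order x p) then 0
     else e ^ order x p * coeff (cofac x p \<circ>\<^sub>p [:x, e:]) (nat n - order x p))"
proof -
  have "[:-x, 1:] \<circ>\<^sub>p [:x, e:] = monom e 1"
    by (simp add: pcompose_pCons monom_altdef)
  then have "p \<circ>\<^sub>p [:x, e:] = monom (e ^ order x p) (order x p) * (cofac x p \<circ>\<^sub>p [:x, e:])"
    by (subst cofac_decomp[of p x]) (simp add: pcompose_mult pcompose_power monom_power)
  then show ?thesis
    by (auto simp: germ_def coeff_monom_mult nat_less_iff)
qed

lemma germ_subdegree:
  assumes "e \<noteq> 0" "p \<noteq> 0"
  shows "fls_subdegree (germ e x p) = order x p"
  using assms poly_cofac_nonzero[OF assms(2)]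
  by (intro fls_subdegree_eqI) (simp_all add: germ_nth pcompose_coeff_0)

lemma germ_nth_order: "germ e x p $$ int (order x p) = e ^ order x p * poly (cofac x p) x"
  by (simp add: germ_nth pcompose_coeff_0)

lemma minus_one_power_int_diff:
  "(-1 :: 'a::field) powi (int m - int n) = (-1) ^ (m + n)"
  by (simp add: power_int_diff power_add) (simp add: power_int_of_nat field_simps)

lemma Ind_plus_germ: "Ind_plus x P Q = pole_jump (germ 1 x P / germ 1 x Q)"
  by (cases "P = 0 \<or> Q = 0")
    (auto simp: Ind_plus_def pole_jump_divide germ_subdegree germ_nth_order valx_def sgn_mult)

lemma Ind_minus_germ: "Ind_minus x P Q = pole_jump (germ (-1) x P / germ (-1) x Q)"
  by (cases "P = 0 \<or> Q = 0")
    (auto simp: Ind_minus_def pole_jump_divide germ_subdegree germ_nth_order valx_def sgn_mult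
      minus_one_power_int_diff power_add power_sgn)

lemma germ_divide_subdegree:
  assumes "e \<noteq> 0" "A \<noteq> 0" "B \<noteq> 0"
  shows "fls_subdegree (germ e x A / germ e x B) = valx x A B"
  using assms by (simp add: fls_divide_subdegree germ_eq_0_iff germ_subdegree valx_def)

lemma Sign_germ:
  assumes e: "e = 1 \<or> e = -1"
  shows "Sign A B x = (if fls_subdegree (germ e x A / germ e x B) = 0
     then sgn (fls_lead (germ e x A / germ e x B)) else 0)"
proof (cases "A = 0 \<or> B = 0")
  case True
  then show ?thesis by (auto simp: Sign_def)
next
  case False
  define F where "F = germ e x A / germ e x B"
  have "e ^ (n + n) = 1" for n
    using e by (auto simp: power_add simp flip: power_mult_distrib)
  moreover have "e \<noteq> 0" using e by auto
  then have "sgn (fls_lead F)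
      = sgn (e ^ (order x A + order x B) * (poly (cofac x A) x * poly (cofac x B) x))"
    using False by (simp add: F_def sgn_fls_lead_divide germ_subdegree germ_nth_order power_add mult_ac)
  ultimately have "sgn (fls_lead F) = sgn (poly (cofac x A) x * poly (cofac x B) x)"
    if "order x A = order x B"
    using that by simp
  moreover have "fls_subdegree F = valx x A B"
    using False e by (auto simp: F_def germ_divide_subdegree)
  ultimately show ?thesis
    unfolding F_def[symmetric] using False by (auto simp: Sign_def valx_def)
qed

lemma bad_iff_germ:
  fixes P Q R S :: "'a::field poly" and x :: 'a
  assumes "e \<noteq> 0" "P \<noteq> 0" "Q \<noteq> 0" "R \<noteq> 0" "S \<noteq> 0" "P * S + Q * R \<noteq> 0"
  defines "f \<equiv> germ e x P / germ e x Q" and "g \<equiv> germ e x R / germ e x S"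
  shows "bad x P Q R S \<longleftrightarrow>
    fls_subdegree f = fls_subdegree g \<and> fls_subdegree f < 0 \<and> fls_subdegree (f + g) = 0"
proof -
  have "f + g = germ e x (P * S + Q * R) / germ e x (Q * S)"
    using assms by (simp add: f_def g_def germ_add germ_mult germ_eq_0_iff field_simps)
  then show ?thesis
    using assms by (simp add: bad_def f_def g_def germ_divide_subdegree)
qed

lemma pole_jump_germ_cot_add:
  fixes P Q R S :: "'a::linordered_field poly"
  assumes nz: "P \<noteq> 0" "Q \<noteq> 0" "R \<noteq> 0" "S \<noteq> 0" "P * S + Q * R \<noteq> 0"
    and e: "e = 1 \<or> e = -1"
  shows "pole_jump (germ e x (P * R - Q * S) / germ e x (P * S + Q * R))
    = pole_jump (germ e x P / germ e x Q) + pole_jump (germ e x R / germ e x S)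
      - sgn (fls_lead (germ e x ((P * S + Q * R) * (Q * S)))) / 2
      + (if bad x P Q R S then 0 else Sign (P * S + Q * R) (Q * S) x / 2)"
proof -
  have "e \<noteq> 0" using e by auto
  define f where "f = germ e x P / germ e x Q"
  define g where "g = germ e x R / germ e x S"
  have germs: "germ e x P \<noteq> 0" "germ e x Q \<noteq> 0" "germ e x R \<noteq> 0" "germ e x S \<noteq> 0"
    "germ e x P * germ e x S + germ e x Q * germ e x R \<noteq> 0"
    using nz \<open>e \<noteq> 0\<close> by (simp_all add: germ_eq_0_iff flip: germ_mult germ_add)
  have sum: "f + g = germ e x (P * S + Q * R) / germ e x (Q * S)"
    using germs by (simp add: f_def g_def germ_add germ_mult field_simps)
  have "f * g - 1 = germ e x (P * R - Q * S) / germ e x (Q * S)"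
    using germs by (simp add: f_def g_def germ_diff germ_mult field_simps)
  then have quot: "germ e x (P * R - Q * S) / germ e x (P * S + Q * R) = (f * g - 1) / (f + g)"
    using germs by (simp add: sum germ_mult)
  have "f \<noteq> 0" "g \<noteq> 0" using germs by (simp_all add: f_def g_def)
  moreover have "f + g \<noteq> 0" unfolding sum using germs by (simp add: germ_add germ_mult)
  moreover have "sgn (fls_lead (f + g)) = sgn (fls_lead (germ e x ((P * S + Q * R) * (Q * S))))"
    unfolding sum sgn_fls_lead_divide germ_mult[of e x "P * S + Q * R" "Q * S"]
    using nz \<open>e \<noteq> 0\<close> by (subst fls_lead_mult) (simp_all add: germ_eq_0_iff)
  moreover have "(if fls_subdegree (f + g) = 0
        \<and> \<not> (fls_subdegree f = fls_subdegree g \<and> fls_subdegree f < 0)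
      then sgn (fls_lead (f + g)) / 2 else 0)
    = (if bad x P Q R S then 0 else Sign (P * S + Q * R) (Q * S) x / 2)"
    using bad_iff_germ[OF \<open>e \<noteq> 0\<close> nz] Sign_germ[OF e, of "P * S + Q * R" "Q * S" x]
    by (simp add: f_def g_def flip: sum)
  ultimately show ?thesis
    using pole_jump_cot_add[of f g] by (simp add: quot f_def g_def)
qed

section \<open>Summation over an interval\<close>

abbreviation germ_sign :: "'a::linordered_field \<Rightarrow> 'a \<Rightarrow> 'a poly \<Rightarrow> 'a" where
  "germ_sign e x p \<equiv> sgn (fls_lead (germ e x p))"

lemma germ_sign_eq_sgn_poly:
  fixes W :: "'a::real_closed_field poly"
  assumes "W \<noteq> 0" "t \<noteq> x"
    and no_roots: "\<And>y. min x t \<le> y \<Longrightarrow> y \<le> max x t \<Longrightarrow> y \<noteq> x \<Longrightarrow> poly W y \<noteq> 0"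
  shows "germ_sign (sgn (t - x)) x W = sgn (poly W t)"
proof -
  define C where "C = cofac x W"
  have W: "poly W y = (y - x) ^ order x W * poly C y" for y
    by (subst cofac_decomp[of W x]) (simp add: C_def poly_power)
  have "poly C y \<noteq> 0" if "min x t \<le> y" "y \<le> max x t" for y
    using that no_roots[OF that] poly_cofac_nonzero[OF \<open>W \<noteq> 0\<close>, of x]
    by (cases "y = x") (auto simp: C_def W)
  then have "sgn (poly C x) = sgn (poly C t)"
    by (cases "x \<le> t") (auto intro: sgn_poly_eq_if_no_roots simp: sgn_poly_eq_if_no_roots[of t x C] min_def max_def)
  moreover have "sgn (t - x) \<noteq> 0" using \<open>t \<noteq> x\<close> by (simp add: sgn_0_0)
  ultimately show ?thesis
    using \<open>W \<noteq> 0\<close> by (simp add: W C_def germ_subdegree germ_nth_order sgn_mult power_sgn)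
qed

lemma germ_sign_no_roots:
  fixes W :: "'a::real_closed_field poly"
  assumes "W \<noteq> 0" "a < b" and no_roots: "\<And>x. a < x \<Longrightarrow> x < b \<Longrightarrow> poly W x \<noteq> 0"
  shows "germ_sign 1 a W = germ_sign (-1) b W"
proof -
  define t where "t = (a + b) / 2"
  have t: "a < t" "t < b" using \<open>a < b\<close> by (simp_all add: t_def field_simps)
  have "germ_sign (sgn (t - a)) a W = sgn (poly W t)"
    using t by (intro germ_sign_eq_sgn_poly \<open>W \<noteq> 0\<close> no_roots) auto
  moreover have "germ_sign (sgn (t - b)) b W = sgn (poly W t)"
    using t by (intro germ_sign_eq_sgn_poly \<open>W \<noteq> 0\<close> no_roots) auto
  ultimately show ?thesis using t by simp
qed

lemma sum_germ_sign_jumps: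
  fixes W :: "'a::real_closed_field poly"
  assumes "W \<noteq> 0" "a < b"
  shows "(\<Sum>x\<in>{x. a < x \<and> x < b \<and> poly W x = 0}. germ_sign 1 x W - germ_sign (-1) x W)
    = germ_sign (-1) b W - germ_sign 1 a W"
  using assms(2)
proof (induction "card {x. a < x \<and> x < b \<and> poly W x = 0}" arbitrary: a b rule: less_induct)
  case less
  define Z where "Z a b = {x. a < x \<and> x < b \<and> poly W x = 0}" for a b
  have finite_Z: "finite (Z a b)" for a b
    using poly_roots_finite[OF \<open>W \<noteq> 0\<close>] by (rule finite_subset[rotated]) (auto simp: Z_def)
  define jump where "jump x = germ_sign 1 x W - germ_sign (-1) x W" for x
  show ?case
  proof (cases "Z a b = {}")
    case True
    then have "germ_sign 1 a W = germ_sign (-1) b W"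
      by (intro germ_sign_no_roots[OF \<open>W \<noteq> 0\<close> less.prems]) (auto simp: Z_def)
    moreover have "{x. a < x \<and> x < b \<and> poly W x = 0} = {}"
      using True by (simp add: Z_def)
    ultimately show ?thesis by (simp only: sum.empty diff_self)
  next
    case False
    then obtain c where c: "c \<in> Z a b" by blast
    then have "a < c" "c < b" by (auto simp: Z_def)
    have split: "Z a b = insert c (Z a c \<union> Z c b)" and "c \<notin> Z a c \<union> Z c b"
      and "Z a c \<inter> Z c b = {}"
      using c by (auto simp: Z_def)
    then have "card (Z a c) < card (Z a b)" "card (Z c b) < card (Z a b)"
      by (auto intro!: psubset_card_mono finite_Z)
    then have "sum jump (Z a c) = germ_sign (-1) c W - germ_sign 1 a W"
      "sum jump (Z c b) = germ_sign (-1) b W - germ_sign 1 c W"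
      using less.hyps \<open>a < c\<close> \<open>c < b\<close> by (simp_all add: Z_def jump_def)
    moreover have "sum jump (Z a b) = jump c + sum jump (Z a c) + sum jump (Z c b)"
      unfolding split using finite_Z \<open>c \<notin> Z a c \<union> Z c b\<close> \<open>Z a c \<inter> Z c b = {}\<close>
      by (simp add: sum.union_disjoint)
    ultimately show ?thesis by (simp add: Z_def jump_def)
  qed
qed

lemma Ind_ab_sum_roots:
  assumes "W \<noteq> 0" "B dvd W"
  shows "Ind_ab a b A B = Ind_plus a A B
    + (\<Sum>x\<in>{x. a < x \<and> x < b \<and> poly W x = 0}. Ind_at x A B) - Ind_minus b A B"
proof -
  have "poly W x = 0" if "Ind_at x A B \<noteq> 0" for x
  proof -
    from that have "B \<noteq> 0" "order x B > 0"
      by (auto simp: Ind_at_def Ind_plus_def Ind_minus_def valx_def split: if_splits)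
    then show ?thesis using \<open>B dvd W\<close> by (auto simp: order_gt_0_iff elim: dvdE)
  qed
  then have "(\<Sum>x\<in>{x. a < x \<and> x < b \<and> Ind_at x A B \<noteq> 0}. Ind_at x A B)
      = (\<Sum>x\<in>{x. a < x \<and> x < b \<and> poly W x = 0}. Ind_at x A B)"
    using poly_roots_finite[OF \<open>W \<noteq> 0\<close>] by (intro sum.mono_neutral_left) auto
  then show ?thesis by (simp add: Ind_ab_def)
qed

lemma Ind_ab_product:
  fixes P Q R S :: "'a::real_closed_field poly"
  assumes nz: "P \<noteq> 0" "Q \<noteq> 0" "R \<noteq> 0" "S \<noteq> 0" "P * S + Q * R \<noteq> 0" and "a < b"
  defines "V x \<equiv> (if bad x P Q R S then 0 else Sign (P * S + Q * R) (Q * S) x / 2)"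
  shows "Ind_ab a b (P * R - Q * S) (P * S + Q * R) = Ind_ab a b P Q + Ind_ab a b R S + V a - V b"
proof -
  define W where "W = (P * S + Q * R) * (Q * S)"
  define Z where "Z = {x. a < x \<and> x < b \<and> poly W x = 0}"
  have "W \<noteq> 0" using nz by (simp add: W_def)
  have dvd: "P * S + Q * R dvd W" "Q dvd W" "S dvd W" by (simp_all add: W_def)
  have plus: "Ind_plus x (P * R - Q * S) (P * S + Q * R)
      = Ind_plus x P Q + Ind_plus x R S - germ_sign 1 x W / 2 + V x" for x
    unfolding Ind_plus_germ W_def V_def by (rule pole_jump_germ_cot_add[OF nz]) simp
  have minus: "Ind_minus x (P * R - Q * S) (P * S + Q * R)
      = Ind_minus x P Q + Ind_minus x R S - germ_sign (-1) x W / 2 + V x" for x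
    unfolding Ind_minus_germ W_def V_def by (rule pole_jump_germ_cot_add[OF nz]) simp
  have "Ind_at x (P * R - Q * S) (P * S + Q * R)
      = Ind_at x P Q + Ind_at x R S - (germ_sign 1 x W - germ_sign (-1) x W) / 2" for x
    unfolding Ind_at_def plus minus by (simp add: field_simps)
  then have "(\<Sum>x\<in>Z. Ind_at x (P * R - Q * S) (P * S + Q * R))
      = (\<Sum>x\<in>Z. Ind_at x P Q) + (\<Sum>x\<in>Z. Ind_at x R S)
        - (\<Sum>x\<in>Z. germ_sign 1 x W - germ_sign (-1) x W) / 2"
    by (simp add: sum.distrib sum_subtractf flip: sum_divide_distrib)
  also have "(\<Sum>x\<in>Z. germ_sign 1 x W - germ_sign (-1) x W) = germ_sign (-1) b W - germ_sign 1 a W"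
    unfolding Z_def by (rule sum_germ_sign_jumps[OF \<open>W \<noteq> 0\<close> \<open>a < b\<close>])
  finally show ?thesis
    using Ind_ab_sum_roots[OF \<open>W \<noteq> 0\<close> dvd(1), of a b "P * R - Q * S"]
      Ind_ab_sum_roots[OF \<open>W \<noteq> 0\<close> dvd(2), of a b P]
      Ind_ab_sum_roots[OF \<open>W \<noteq> 0\<close> dvd(3), of a b R] plus[of a] minus[of b]
    unfolding Z_def by (simp add: field_simps)
qed

theorem proposition2p4:
  fixes P Q R S :: "'a::real_closed_field poly" and a b :: 'a
  assumes "\<not> (P = 0 \<and> Q = 0)" and "\<not> (R = 0 \<and> S = 0)" and "a < b"
  shows "(bad a P Q R S \<and> \<not> bad b P Q R S \<longrightarrow>
            Ind_ab a b (P * R - Q * S) (P * S + Q * R)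
              = Ind_ab a b P Q + Ind_ab a b R S - Sign (P * S + Q * R) (Q * S) b / 2)
       \<and> (bad b P Q R S \<and> \<not> bad a P Q R S \<longrightarrow>
            Ind_ab a b (P * R - Q * S) (P * S + Q * R)
              = Ind_ab a b P Q + Ind_ab a b R S + Sign (P * S + Q * R) (Q * S) a / 2)
       \<and> (bad a P Q R S \<and> bad b P Q R S \<longrightarrow>
            Ind_ab a b (P * R - Q * S) (P * S + Q * R)
              = Ind_ab a b P Q + Ind_ab a b R S)"
proof -
  have "Ind_ab a b (P * R - Q * S) (P * S + Q * R) = Ind_ab a b P Q + Ind_ab a b R S
      + (if bad a P Q R S then 0 else Sign (P * S + Q * R) (Q * S) a / 2)
      - (if bad b P Q R S then 0 else Sign (P * S + Q * R) (Q * S) b / 2)"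
    if "bad c P Q R S" for c
    using that Ind_ab_product[OF _ _ _ _ _ \<open>a < b\<close>, of P Q R S] by (auto simp: bad_def)
  then show ?thesis by auto
qed

end
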